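(* Let $$\tau_1(x)=\begin{cases}\tfrac43x,&0\le x<\tfrac3{20},\\ 16x-\tfrac{11}5,&\tfrac3{20}\le x<\tfrac15,\\ 5x \pmod 1,&\tfrac15\le x\le1,\end{cases}\qquad \tau_2(x)=\begin{cases}16x,&0\le x<\tfrac1{20},\\ \tfrac43x+\tfrac{11}{15},&\tfrac1{20}\le x<\tfrac15,\\ 5x\pmod 1,&\tfrac15\le x\le1.\end{cases}$$ The map $\tau(x)=5x \pmod 1$ satisfies $\tau_1\le\tau\le\tau_2$ and preserves Lebesgue measure. However, there is no Borel measurable function $p:[0,1]\to[0,1]$ such that the position dependent random map $T=(\tau_1,\tau_2;p,1-p)$ preserves Lebesgue measure.
   Context: A position dependent random map $T=(\tau_1,\tau_2;p,1-p)$ with measurable $p:[0,1]\to[0,1]$ moves a point $x$ to $\tau_1(x)$ with probability $p(x)$ and to $\tau_2(x)$ with probability $1-p(x)$. It preserves a probability measure $\mu$ if $\mu(A)=\int\big(p(x)\chi_A(\tau_1(x))+(1-p(x))\chi_A(\tau_2(x))\big)\,d\mu(x)$ for every Borel $A\subseteq[0,1]$; for $\mu$ with density $f$ this is equivalent to $P_{\tau_1}(pf)+P_{\tau_2}((1-p)f)=f$, where $P_{\tau_k}$ is the Frobenius–Perron operator of $\tau_k$. *)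

theory Defs
  imports "HOL-Analysis.Analysis"
begin

definition leb01 :: "real measure" where
  "leb01 = restrict_space lborel {0..1}"

definition tau1 :: "real \<Rightarrow> real" where
  "tau1 x = (if x < 3/20 then 4/3 * x
             else if x < 1/5 then 16 * x - 11/5
             else frac (5 * x))"

definition tau2 :: "real \<Rightarrow> real" where
  "tau2 x = (if x < 1/20 then 16 * x
             else if x < 1/5 then 4/3 * x + 11/15
             else frac (5 * x))"

definition tau :: "real \<Rightarrow> real" where
  "tau x = frac (5 * x)"

definition map_preserves :: "(real \<Rightarrow> real) \<Rightarrow> real measure \<Rightarrow> bool" where
  "map_preserves t mu \<longleftrightarrow>
     (\<forall>A \<in> sets borel. A \<subseteq> {0..1} \<longrightarrow>
        measure mu {x \<in> space mu. t x \<in> A} = measure mu A)"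

definition random_map_preserves ::
  "(real \<Rightarrow> real) \<Rightarrow> (real \<Rightarrow> real) \<Rightarrow> (real \<Rightarrow> real) \<Rightarrow> real measure \<Rightarrow> bool" where
  "random_map_preserves t1 t2 p mu \<longleftrightarrow>
     (\<forall>A \<in> sets borel. A \<subseteq> {0..1} \<longrightarrow>
        measure mu A = (\<integral>x. p x * indicator A (t1 x) + (1 - p x) * indicator A (t2 x) \<partial>mu))"

end

theory Submission
  imports Defs
begin

text \<open>
  The map \<open>x \<mapsto> frac (5 x)\<close> has five affine branches of slope 5, so the preimage of
  any Borel set has the same Lebesgue measure. For the random map, test invariance on
  \<open>A = [1/5, 4/5)\<close>. Both \<open>\<tau>\<^sub>1\<close> and \<open>\<tau>\<^sub>2\<close> agree with \<open>\<tau>\<close> on \<open>[1/5, 1]\<close>, where \<open>\<tau>\<close>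
  puts mass \<open>3/5 - 3/25\<close> into \<open>A\<close>; on \<open>[0, 1/5)\<close> the points that \<open>\<tau>\<^sub>1\<close> or \<open>\<tau>\<^sub>2\<close> send
  into \<open>A\<close> form the intervals \<open>[3/20, 3/16)\<close> and \<open>[1/80, 1/20)\<close> of total length \<open>3/40\<close>.
  Whatever the probability \<open>p\<close>, the mass arriving in \<open>A\<close> is therefore at most
  \<open>3/5 - 3/25 + 3/40 < 3/5\<close>.
\<close>

lemma space_leb01 [simp]: "space leb01 = {0..1}"
  by (simp add: leb01_def space_restrict_space)

lemma sets_leb01: "sets leb01 = sets (restrict_space borel {0..1::real})"
  by (simp add: leb01_def sets_restrict_space)

lemma measure_leb01: "S \<subseteq> {0..1} \<Longrightarrow> measure leb01 S = measure lborel S"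
  unfolding leb01_def by (rule measure_restrict_space) auto

lemma finite_measure_leb01: "finite_measure leb01"
  by (intro finite_measureI) (simp add: leb01_def emeasure_restrict_space)

lemma borel_measurable_leb01: "f \<in> borel_measurable borel \<Longrightarrow> f \<in> borel_measurable leb01"
  unfolding leb01_def by (rule measurable_restrict_space1) simp

lemma integrable_leb01_bounded:
  fixes f :: "real \<Rightarrow> real"
  assumes "f \<in> borel_measurable leb01" "\<And>x. x \<in> {0..1} \<Longrightarrow> \<bar>f x\<bar> \<le> B"
  shows "integrable leb01 f"
  using assms by (intro finite_measure.integrable_const_bound[OF finite_measure_leb01, where B = B]) auto

lemma integrable_indicator_leb01:
  "S \<in> sets borel \<Longrightarrow> integrable leb01 (indicator S :: real \<Rightarrow> real)"
  by (rule integrable_leb01_bounded[where B = 1])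
     (auto intro: borel_measurable_leb01 simp: indicator_def)

lemma integral_indicator_leb01:
  "S \<subseteq> {0..1} \<Longrightarrow> integral\<^sup>L leb01 (indicator S :: real \<Rightarrow> real) = measure lborel S"
  by (simp add: measure_leb01 Int_absorb2)

lemma integral_indicator_interval_leb01:
  "0 \<le> a \<Longrightarrow> a \<le> b \<Longrightarrow> b \<le> 1 \<Longrightarrow> integral\<^sup>L leb01 (indicator {a..<b} :: real \<Rightarrow> real) = b - a"
  by (subst integral_indicator_leb01) auto

lemma borel_measurable_frac [measurable]: "(frac :: real \<Rightarrow> real) \<in> borel_measurable borel"
  unfolding frac_def[abs_def] by measurable

lemma tau_measurable [measurable]: "tau \<in> borel_measurable borel"
  unfolding tau_def[abs_def] by measurable

lemma tau1_measurable [measurable]: "tau1 \<in> borel_measurable borel"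
  unfolding tau1_def[abs_def] by measurable

lemma tau2_measurable [measurable]: "tau2 \<in> borel_measurable borel"
  unfolding tau2_def[abs_def] by measurable

lemma indicator_frac_mult_preimage:
  fixes A :: "real set"
  assumes "n > 0" "x \<noteq> 1"
  shows "indicator {x \<in> {0..1}. frac (real n * x) \<in> A} x
     = (\<Sum>k<n. indicator (A \<inter> {0..<1}) (real n * x - real k) :: real)"
proof (cases "0 \<le> x \<and> x < 1")
  case False
  have "real n * x - real k \<notin> {0..<1}" if "k < n" for k
  proof -
    from \<open>k < n\<close> have "real k + 1 \<le> real n" by linarith
    consider "x < 0" | "x > 1" using False assms by fastforce
    then show ?thesis
    proof cases
      case 1
      then have "real n * x < 0" using \<open>k < n\<close> by (simp add: mult_pos_neg)
      then show ?thesis by auto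
    next
      case 2
      then have "real n * x > real n" using \<open>k < n\<close> by simp
      with \<open>real k + 1 \<le> real n\<close> have "real n * x - real k > 1" by linarith
      then show ?thesis by simp
    qed
  qed
  then show ?thesis using False assms by (auto simp: indicator_def)
next
  case True
  define j where "j = nat \<lfloor>real n * x\<rfloor>"
  have "0 \<le> \<lfloor>real n * x\<rfloor>" "\<lfloor>real n * x\<rfloor> < n"
    using True \<open>n > 0\<close> by (auto simp: floor_less_iff)
  then have "j < n" "real j = of_int \<lfloor>real n * x\<rfloor>"
    by (auto simp: j_def nat_less_iff)
  then have frac_eq: "frac (real n * x) = real n * x - real j"
    by (simp add: frac_def)
  have branch_unique: "real n * x - real k \<notin> {0..<1}" if "k \<noteq> j" for k
  proof
    assume "real n * x - real k \<in> {0..<1}"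
    then have "\<lfloor>real n * x\<rfloor> = int k" by (intro floor_unique) auto
    then show False using that by (simp add: j_def)
  qed
  have "(\<Sum>k<n. indicator (A \<inter> {0..<1}) (real n * x - real k) :: real)
      = (\<Sum>k<n. if k = j then indicator (A \<inter> {0..<1}) (real n * x - real j) else 0)"
    by (rule sum.cong) (auto simp: indicator_def dest: branch_unique)
  also have "\<dots> = indicator (A \<inter> {0..<1}) (real n * x - real j)"
    using \<open>j < n\<close> by simp
  also have "\<dots> = indicator {x \<in> {0..1}. frac (real n * x) \<in> A} x"
    using True frac_eq frac_lt_1[of "real n * x"] frac_ge_0[of "real n * x"]
    by (auto simp: indicator_def)
  finally show ?thesis ..
qed

lemma measure_frac_mult_preimage:
  fixes A :: "real set"
  assumes [measurable]: "A \<in> sets borel" and "n > 0"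
  shows "measure lborel {x \<in> {0..1}. frac (real n * x) \<in> A} = measure lborel (A \<inter> {0..1})"
proof -
  define B where "B = A \<inter> {0..<1}"
  have [measurable]: "B \<in> sets borel" unfolding B_def by measurable
  have "emeasure lborel B \<le> emeasure lborel {0..1::real}"
    by (rule emeasure_mono) (auto simp: B_def)
  then have "integrable lborel (indicator B :: real \<Rightarrow> real)"
    by (simp add: integrable_indicator_iff order_le_less_trans)
  then have branch_integrable:
      "integrable lborel (\<lambda>x. indicator B (real n * x - real k) :: real)" for k
    using lborel_integrable_real_affine[of "indicator B" "real n" "- real k"] \<open>n > 0\<close>
    by (simp add: add.commute)
  have branch_integral:
      "integral\<^sup>L lborel (\<lambda>x. indicator B (real n * x - real k) :: real) = measure lborel B / n" for k
    using lborel_integral_real_affine[of "real n" "indicator B :: real \<Rightarrow> real" "- real k"] \<open>n > 0\<close>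
    by (simp add: add.commute)
  have [measurable]: "{x \<in> {0..1}. frac (real n * x) \<in> A} \<in> sets borel"
    by measurable
  have "AE x in lborel. x \<noteq> 1"
    by (rule AE_lborel_singleton)
  have "measure lborel {x \<in> {0..1}. frac (real n * x) \<in> A}
      = integral\<^sup>L lborel (indicator {x \<in> {0..1}. frac (real n * x) \<in> A} :: real \<Rightarrow> real)"
    by simp
  also have "\<dots> = integral\<^sup>L lborel (\<lambda>x. \<Sum>k<n. indicator B (real n * x - real k) :: real)"
  proof (rule integral_cong_AE)
    show "AE x in lborel. indicator {x \<in> {0..1}. frac (real n * x) \<in> A} x
        = (\<Sum>k<n. indicator B (real n * x - real k) :: real)"
      using \<open>AE x in lborel. x \<noteq> 1\<close>
      unfolding B_def by eventually_elim (rule indicator_frac_mult_preimage[OF \<open>n > 0\<close>])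
  qed simp_all
  also have "\<dots> = (\<Sum>k<n. measure lborel B / n)"
    by (simp add: branch_integrable branch_integral)
  also have "\<dots> = integral\<^sup>L lborel (indicator B :: real \<Rightarrow> real)"
    using \<open>n > 0\<close> by simp
  also have "\<dots> = integral\<^sup>L lborel (indicator (A \<inter> {0..1}) :: real \<Rightarrow> real)"
    using \<open>AE x in lborel. x \<noteq> 1\<close>
    by (intro integral_cong_AE) (auto elim!: eventually_mono simp: B_def indicator_def)
  also have "\<dots> = measure lborel (A \<inter> {0..1})"
    by simp
  finally show ?thesis .
qed

lemma measure_tau_preimage:
  "A \<in> sets borel \<Longrightarrow> measure lborel {x \<in> {0..1}. tau x \<in> A} = measure lborel (A \<inter> {0..1})"
  using measure_frac_mult_preimage[of A 5] by (simp add: tau_def)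

lemma map_preserves_tau: "map_preserves tau leb01"
  unfolding map_preserves_def
proof (intro ballI impI)
  fix A :: "real set" assume "A \<in> sets borel" "A \<subseteq> {0..1}"
  then have "measure leb01 {x \<in> space leb01. tau x \<in> A} = measure lborel (A \<inter> {0..1})"
    using measure_tau_preimage[of A] by (subst measure_leb01) auto
  also have "\<dots> = measure leb01 A"
    using \<open>A \<subseteq> {0..1}\<close> by (simp add: measure_leb01 Int_absorb2)
  finally show "measure leb01 {x \<in> space leb01. tau x \<in> A} = measure leb01 A" .
qed

lemma tau1_le_tau_le_tau2:
  assumes "0 \<le> x"
  shows "tau1 x \<le> tau x \<and> tau x \<le> tau2 x"
proof (cases "x < 1/5")
  case True
  then have "frac (5 * x) = 5 * x" using assms by (intro frac_eq_id) auto
  then show ?thesis using True assms by (auto simp: tau_def tau1_def tau2_def)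
qed (auto simp: tau_def tau1_def tau2_def)

lemma random_step_into_middle_le:
  fixes x P :: real
  assumes "0 \<le> x" "0 \<le> P" "P \<le> 1"
  defines "A \<equiv> {1/5..<4/5::real}"
  shows "P * indicator A (tau1 x) + (1 - P) * indicator A (tau2 x)
     \<le> indicator A (tau x) - indicator {1/25..<4/25::real} x
        + indicator {3/20..<3/16::real} x + indicator {1/80..<1/20::real} x"
proof (cases "x < 1/5")
  case True
  then have "tau x = 5 * x" using assms unfolding tau_def by (intro frac_eq_id) auto
  then have "indicator A (tau x) = (indicator {1/25..<4/25::real} x :: real)"
    by (auto simp: A_def indicator_def)
  moreover have "indicator A (tau1 x) \<le> (indicator {3/20..<3/16::real} x :: real)"
    "indicator A (tau2 x) \<le> (indicator {1/80..<1/20::real} x :: real)"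
    using True by (auto simp: A_def tau1_def tau2_def indicator_def)
  moreover have "P * indicator A (tau1 x) \<le> (indicator A (tau1 x) :: real)"
    "(1 - P) * indicator A (tau2 x) \<le> (indicator A (tau2 x) :: real)"
    using assms by (simp_all add: indicator_def)
  ultimately show ?thesis by linarith
next
  case False
  then show ?thesis by (simp add: tau_def tau1_def tau2_def indicator_def algebra_simps)
qed

lemma random_map_mass_into_middle_le:
  fixes p :: "real \<Rightarrow> real"
  assumes [measurable]: "p \<in> borel_measurable leb01" and p01: "\<And>x. x \<in> {0..1} \<Longrightarrow> 0 \<le> p x \<and> p x \<le> 1"
  defines "A \<equiv> {1/5..<4/5::real}"
  shows "(\<integral>x. p x * indicator A (tau1 x) + (1 - p x) * indicator A (tau2 x) \<partial>leb01)
    \<le> 3/5 - 3/25 + 3/40"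
proof -
  have [measurable]: "A \<in> sets borel"
    unfolding A_def by measurable
  define P where "P = {x \<in> {0..1}. tau x \<in> A}"
  have [measurable]: "P \<in> sets borel"
    unfolding P_def by measurable
  have [measurable]: "tau1 \<in> borel_measurable leb01" "tau2 \<in> borel_measurable leb01"
    by (simp_all add: borel_measurable_leb01)
  have "A \<inter> {0..1} = A"
    by (auto simp: A_def)
  then have "measure lborel P = measure lborel A"
    by (simp only: P_def measure_tau_preimage[OF \<open>A \<in> sets borel\<close>])
  then have integral_P: "integral\<^sup>L leb01 (indicator P) = (3/5 :: real)"
    by (subst integral_indicator_leb01) (auto simp: P_def A_def)
  define bound :: "real \<Rightarrow> real" where "bound =
    (\<lambda>x. indicator P x - indicator {1/25..<4/25} x
      + indicator {3/20..<3/16} x + indicator {1/80..<1/20} x)"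
  have "integrable leb01 (\<lambda>x. p x * indicator A (tau1 x) + (1 - p x) * indicator A (tau2 x))"
  proof (rule integrable_leb01_bounded[where B = 1])
    fix x :: real assume "x \<in> {0..1}"
    with p01 show "\<bar>p x * indicator A (tau1 x) + (1 - p x) * indicator A (tau2 x)\<bar> \<le> 1"
      by (auto simp: indicator_def)
  qed measurable
  moreover have "integrable leb01 bound"
    unfolding bound_def by (simp add: integrable_indicator_leb01)
  ultimately have "(\<integral>x. p x * indicator A (tau1 x) + (1 - p x) * indicator A (tau2 x) \<partial>leb01)
      \<le> integral\<^sup>L leb01 bound"
    using random_step_into_middle_le p01
    by (intro integral_mono) (auto simp: A_def P_def bound_def indicator_def)
  also have "\<dots> = integral\<^sup>L leb01 (indicator P) - integral\<^sup>L leb01 (indicator {1/25..<4/25})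
      + integral\<^sup>L leb01 (indicator {3/20..<3/16}) + integral\<^sup>L leb01 (indicator {1/80..<1/20})"
    by (simp add: bound_def integrable_indicator_leb01 del: Bochner_Integration.integral_indicator)
  finally show ?thesis
    by (simp add: integral_P integral_indicator_interval_leb01 del: Bochner_Integration.integral_indicator)
qed

lemma no_random_map_preserves_leb01:
  "\<not> (\<exists>p :: real \<Rightarrow> real.
        p \<in> borel_measurable (restrict_space borel {0..1})
      \<and> (\<forall>x \<in> {0..1}. 0 \<le> p x \<and> p x \<le> 1)
      \<and> random_map_preserves tau1 tau2 p leb01)"
proof
  assume "\<exists>p :: real \<Rightarrow> real. p \<in> borel_measurable (restrict_space borel {0..1})
      \<and> (\<forall>x \<in> {0..1}. 0 \<le> p x \<and> p x \<le> 1) \<and> random_map_preserves tau1 tau2 p leb01"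
  then obtain p :: "real \<Rightarrow> real"
    where "p \<in> borel_measurable (restrict_space borel {0..1})"
      and p01: "\<forall>x \<in> {0..1}. 0 \<le> p x \<and> p x \<le> 1"
      and preserves: "random_map_preserves tau1 tau2 p leb01"
    by blast
  then have "p \<in> borel_measurable leb01"
    by (simp add: measurable_cong_sets[OF sets_leb01 refl])
  define A where "A = {1/5..<4/5::real}"
  have "A \<in> sets borel" "A \<subseteq> {0..1}"
    by (auto simp: A_def)
  then have "3/5 = measure leb01 A"
    by (subst measure_leb01) (auto simp: A_def)
  also have "\<dots> = (\<integral>x. p x * indicator A (tau1 x) + (1 - p x) * indicator A (tau2 x) \<partial>leb01)"
    using preserves \<open>A \<in> sets borel\<close> \<open>A \<subseteq> {0..1}\<close>
    unfolding random_map_preserves_def by blast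
  also have "\<dots> \<le> 3/5 - 3/25 + 3/40"
    unfolding A_def using \<open>p \<in> borel_measurable leb01\<close> p01
    by (intro random_map_mass_into_middle_le) auto
  finally show False
    by simp
qed

theorem mainTheorem6:
  shows "(\<forall>x \<in> {0..1}. tau1 x \<le> tau x \<and> tau x \<le> tau2 x)
    \<and> map_preserves tau leb01
    \<and> \<not> (\<exists>p :: real \<Rightarrow> real.
            p \<in> borel_measurable (restrict_space borel {0..1})
          \<and> (\<forall>x \<in> {0..1}. 0 \<le> p x \<and> p x \<le> 1)
          \<and> random_map_preserves tau1 tau2 p leb01)"
  using tau1_le_tau_le_tau2 map_preserves_tau no_random_map_preserves_leb01 by auto

end
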